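(* Let $m\ge 2$, $R>0$, $\alpha\le 0$, and $h\in C^2([0,\infty))$ with $h''(r)\ge 0$ on $(0,\infty)$. Let $\mu_1$ be the first eigenvalue of the problem $$w''+\Big(\frac{m-1}{r}+h'(r)\Big)w'+\Big(\lambda-\frac{m-1}{r^2}\Big)w=0\ \text{ in }(0,R),\qquad w(0)=0,\quad w'(R)+\alpha w(R)=0,$$ and let $g$ be a corresponding eigenfunction, chosen positive on $(0,R]$ with $g'(0)=1$. Then: (1) $g'(r)>0$ for all $r\in(0,R)$; (2) if in addition $\alpha\ge -\frac2R$, then $g'(r)\ge -\alpha g(r)$ for all $r\in(0,R]$.
   Context: $\mu_1$ admits the variational characterization $\mu_1=\inf\{\frac{\int_0^R(g'^2+\frac{m-1}{r^2}g^2)r^{m-1}e^{h(r)}dr+\alpha g(R)^2R^{m-1}e^{h(R)}}{\int_0^R g^2r^{m-1}e^{h(r)}dr}: g\in W^{1,2}((0,R)),\ g(0)=0\}$. *)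

theory Defs
  imports "HOL-Analysis.Analysis"
begin

text \<open>The function h enters only through its derivative h1.\<close>

definition sl_eigenpair ::
  "nat \<Rightarrow> (real \<Rightarrow> real) \<Rightarrow> real \<Rightarrow> real \<Rightarrow> real \<Rightarrow> (real \<Rightarrow> real) \<Rightarrow> (real \<Rightarrow> real) \<Rightarrow> bool" where
  "sl_eigenpair m h1 \<alpha> R lam w wd \<longleftrightarrow>
     (\<forall>r\<in>{0..R}. (w has_real_derivative wd r) (at r within {0..R})) \<and>
     (\<forall>r\<in>{0<..<R}. \<exists>wdd. (wd has_real_derivative wdd) (at r) \<and>
         wdd + ((real m - 1) / r + h1 r) * wd r + (lam - (real m - 1) / r\<^sup>2) * w r = 0) \<and>
     w 0 = 0 \<and> wd R + \<alpha> * w R = 0 \<and>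
     (\<exists>r\<in>{0..R}. w r \<noteq> 0)"

definition sl_eigenvalue :: "nat \<Rightarrow> (real \<Rightarrow> real) \<Rightarrow> real \<Rightarrow> real \<Rightarrow> real \<Rightarrow> bool" where
  "sl_eigenvalue m h1 \<alpha> R lam \<longleftrightarrow> (\<exists>w wd. sl_eigenpair m h1 \<alpha> R lam w wd)"

definition sl_first_eigenvalue :: "nat \<Rightarrow> (real \<Rightarrow> real) \<Rightarrow> real \<Rightarrow> real \<Rightarrow> real \<Rightarrow> bool" where
  "sl_first_eigenvalue m h1 \<alpha> R \<mu> \<longleftrightarrow>
     sl_eigenvalue m h1 \<alpha> R \<mu> \<and> (\<forall>lam. sl_eigenvalue m h1 \<alpha> R lam \<longrightarrow> \<mu> \<le> lam)"

end

theory Submission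
  imports Defs
begin

(* With the weight p = r^(m-1) e^h the equation reads (p g')' = p Q g, where
   Q = (m-1)/r^2 - mu is strictly decreasing.  Where Q(r) >= 0 the flux p g' has been
   increasing since a point where g' > 0; where Q(r) < 0 it decreases up to R, so g'(r) <= 0
   would push g' below a negative constant near R, against g'(R) = -alpha g(R) >= 0.

   For the second claim let w = g'/g + alpha, which vanishes at R.  While w <= 0 we have
   g' <= -alpha g < 2 g/r, and together with h'' >= 0 this makes W = p g^2 w' strictly
   decreasing.  If w(r) < 0 for some r < R, then w has a negative minimum at some t0 to the
   right of a point where w >= 0, so W(t0) <= 0; from then on w can never climb back above
   w(t0), and integrating g'/g <= -alpha + w(t0) up to R contradicts the boundary condition. *)

lemma DERIV_left_min_nonpos:
  fixes f :: "real \<Rightarrow> real"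
  assumes "(f has_real_derivative D) (at x within {a..x})" "a < x"
    and "\<And>t. a \<le> t \<Longrightarrow> t < x \<Longrightarrow> f x \<le> f t"
  shows "D \<le> 0"
proof -
  have lim: "((\<lambda>y. (f y - f x) / (y - x)) \<longlongrightarrow> D) (at_left x)"
    using assms(1) has_field_derivative_iff at_within_Icc_at_left[OF assms(2)] by metis
  have "\<forall>\<^sub>F y in at_left x. (f y - f x) / (y - x) \<le> 0"
    using eventually_at_left_real[OF assms(2)]
  proof (rule eventually_mono)
    fix y assume "y \<in> {a<..<x}"
    then have "f y - f x \<ge> 0" "y - x < 0" using assms(3) by auto
    then show "(f y - f x) / (y - x) \<le> 0" by (simp add: divide_nonneg_neg)
  qed
  then show ?thesis using tendsto_upperbound[OF lim] trivial_limit_at_left_real by blast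
qed

lemma DERIV_right_endpoint_le:
  fixes f f' :: "real \<Rightarrow> real"
  assumes "a < b" and cont: "continuous_on {a..b} f"
    and deriv: "\<And>x. a < x \<Longrightarrow> x < b \<Longrightarrow> (f has_real_derivative f' x) (at x)"
    and bound: "\<And>x. a < x \<Longrightarrow> x < b \<Longrightarrow> f' x \<le> c"
    and "(f has_real_derivative D) (at b within {a..b})"
  shows "D \<le> c"
proof -
  have "f b - c * b \<le> f t - c * t" if "a \<le> t" "t < b" for t
  proof (rule DERIV_nonpos_imp_decreasing_open[of t b "\<lambda>s. f s - c * s"])
    show "continuous_on {t..b} (\<lambda>s. f s - c * s)"
      using that by (intro continuous_intros continuous_on_subset[OF cont]) auto
    show "\<exists>y. ((\<lambda>s. f s - c * s) has_real_derivative y) (at x) \<and> y \<le> 0" if "t < x" "x < b" for x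
      using \<open>a \<le> t\<close> that bound[of x]
      by (intro exI[of _ "f' x - c"]) (auto intro!: derivative_eq_intros deriv)
  qed (use that in simp)
  moreover have "((\<lambda>s. f s - c * s) has_real_derivative D - c) (at b within {a..b})"
    using assms(5) by (auto intro!: derivative_eq_intros)
  ultimately have "D - c \<le> 0"
    using DERIV_left_min_nonpos[OF _ \<open>a < b\<close>] by blast
  then show ?thesis by simp
qed

lemma le_initial_value_while_negative:
  fixes f :: "real \<Rightarrow> real"
  assumes "a \<le> b" and cont: "continuous_on {a..b} f" and "f a < 0"
    and drop: "\<And>u. a < u \<Longrightarrow> u \<le> b \<Longrightarrow> (\<forall>t\<in>{a..<u}. f t < 0) \<Longrightarrow> f u < f a"
  shows "f b \<le> f a"
proof -
  define Z where "Z = {t \<in> {a..b}. 0 \<le> f t}"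
  show ?thesis
  proof (cases "Z = {}")
    case True
    then have "\<forall>t\<in>{a..<b}. f t < 0" unfolding Z_def by fastforce
    then show ?thesis using drop[of b] \<open>a \<le> b\<close> by (cases "a = b") auto
  next
    case False
    have "closed Z"
      unfolding Z_def using cont by (intro continuous_on_closed_Collect_le continuous_intros) auto
    moreover have bdd: "bdd_below Z" unfolding Z_def by (rule bdd_belowI[of _ a]) auto
    ultimately have "Inf Z \<in> Z" using False closed_contains_Inf by blast
    then have in_Z: "a \<le> Inf Z" "Inf Z \<le> b" "0 \<le> f (Inf Z)" by (auto simp: Z_def)
    then have "a < Inf Z" using \<open>f a < 0\<close> by (cases "a = Inf Z") auto
    moreover have "\<forall>t\<in>{a..<Inf Z}. f t < 0"
      using cInf_lower[OF _ bdd] in_Z by (force simp: Z_def not_less)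
    ultimately have "f (Inf Z) < f a" using drop in_Z by blast
    then show ?thesis using in_Z \<open>f a < 0\<close> by simp
  qed
qed

locale radial_eigenfunction =
  fixes m :: nat and h h1 h2 :: "real \<Rightarrow> real" and \<alpha> R \<mu> :: real and g g1 :: "real \<Rightarrow> real"
  assumes m_ge_2: "m \<ge> 2" and R_pos: "0 < R" and \<alpha>_nonpos: "\<alpha> \<le> 0"
    and h_deriv: "\<And>t. 0 < t \<Longrightarrow> (h has_real_derivative h1 t) (at t)"
    and h1_deriv: "\<And>t. 0 < t \<Longrightarrow> (h1 has_real_derivative h2 t) (at t)"
    and eigenpair: "sl_eigenpair m h1 \<alpha> R \<mu> g g1"
    and g_pos: "\<And>t. 0 < t \<Longrightarrow> t \<le> R \<Longrightarrow> 0 < g t"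
begin

definition drift :: "real \<Rightarrow> real" where
  "drift t = (real m - 1) / t + h1 t"

definition potential :: "real \<Rightarrow> real" where
  "potential t = (real m - 1) / t\<^sup>2 - \<mu>"

definition g2 :: "real \<Rightarrow> real" where
  "g2 t = potential t * g t - drift t * g1 t"

text \<open>The weight \<open>r\<^bsup>m-1\<^esup> e\<^bsup>h(r)\<^esup>\<close> of the variational characterisation, which puts the
  equation in the divergence form \<open>(weight g')' = weight potential g\<close>.\<close>

definition weight :: "real \<Rightarrow> real" where
  "weight t = exp ((real m - 1) * ln t + h t)"

lemma g_has_derivative_within: "t \<in> {0..R} \<Longrightarrow> (g has_real_derivative g1 t) (at t within {0..R})"
  using eigenpair by (simp add: sl_eigenpair_def)

lemma g_0: "g 0 = 0" and g1_R: "g1 R = - \<alpha> * g R"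
  using eigenpair by (simp_all add: sl_eigenpair_def eq_neg_iff_add_eq_0)

lemma continuous_on_g: "continuous_on {0..R} g"
  using g_has_derivative_within DERIV_continuous_on by blast

lemma g_has_derivative: "0 < t \<Longrightarrow> t < R \<Longrightarrow> (g has_real_derivative g1 t) (at t)"
  using g_has_derivative_within[of t] at_within_interior[of t "{0..R}"] by simp

lemma g1_has_derivative:
  assumes "0 < t" "t < R"
  shows "(g1 has_real_derivative g2 t) (at t)"
proof -
  have "t \<in> {0<..<R}" using assms by simp
  with eigenpair obtain g1' where "(g1 has_real_derivative g1') (at t)"
    and "g1' + ((real m - 1) / t + h1 t) * g1 t + (\<mu> - (real m - 1) / t\<^sup>2) * g t = 0"
    unfolding sl_eigenpair_def by blast
  moreover from this(2) have "g1' = g2 t"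
    by (simp add: g2_def drift_def potential_def algebra_simps)
  ultimately show ?thesis by simp
qed

lemma continuous_on_g1: "0 < a \<Longrightarrow> b < R \<Longrightarrow> continuous_on {a..b} g1"
  by (intro continuous_at_imp_continuous_on ballI DERIV_isCont[OF g1_has_derivative]) auto

lemma weight_pos: "0 < weight t"
  by (simp add: weight_def)

lemma weight_has_derivative: "0 < t \<Longrightarrow> (weight has_real_derivative weight t * drift t) (at t)"
  unfolding weight_def drift_def
  by (rule derivative_eq_intros h_deriv refl | simp add: field_simps)+

lemma continuous_on_weight: "0 < a \<Longrightarrow> continuous_on {a..b} weight"
  by (intro continuous_at_imp_continuous_on ballI DERIV_isCont[OF weight_has_derivative]) auto

lemma flux_has_derivative:
  "0 < t \<Longrightarrow> t < R \<Longrightarrow>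
    ((\<lambda>t. weight t * g1 t) has_real_derivative weight t * potential t * g t) (at t)"
  by (rule derivative_eq_intros weight_has_derivative g1_has_derivative refl
      | simp add: g2_def algebra_simps)+

lemma continuous_on_flux: "0 < a \<Longrightarrow> b < R \<Longrightarrow> continuous_on {a..b} (\<lambda>t. weight t * g1 t)"
  by (intro continuous_intros continuous_on_weight continuous_on_g1)

lemma potential_strict_antimono: "0 < s \<Longrightarrow> s < t \<Longrightarrow> potential t < potential s"
  using m_ge_2 unfolding potential_def
  by (auto intro!: divide_strict_left_mono power_strict_mono)

lemma g1_pos_where_potential_nonneg:
  assumes r: "0 < r" "r < R" and "0 \<le> potential r"
  shows "0 < g1 r"
proof -
  have "\<exists>\<xi>. 0 < \<xi> \<and> \<xi> < r \<and> 0 < g1 \<xi>"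
  proof (rule ccontr)
    assume no_\<xi>: "\<nexists>\<xi>. 0 < \<xi> \<and> \<xi> < r \<and> 0 < g1 \<xi>"
    have "g r \<le> g 0"
    proof (rule DERIV_nonpos_imp_decreasing_open[of 0 r g])
      show "continuous_on {0..r} g" using continuous_on_g by (rule continuous_on_subset) (use r in auto)
      show "\<exists>y. (g has_real_derivative y) (at x) \<and> y \<le> 0" if "0 < x" "x < r" for x
        using no_\<xi> that r by (intro exI[of _ "g1 x"] conjI g_has_derivative) (fastforce simp: not_less)+
    qed (use r in simp)
    then show False using g_pos[of r] r g_0 by simp
  qed
  then obtain \<xi> where \<xi>: "0 < \<xi>" "\<xi> < r" "0 < g1 \<xi>" by blast
  have "weight \<xi> * g1 \<xi> < weight r * g1 r"
  proof (rule DERIV_pos_imp_increasing_open[OF \<open>\<xi> < r\<close>])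
    fix t assume t: "\<xi> < t" "t < r"
    then have "0 < potential t" using potential_strict_antimono[of t r] \<open>0 \<le> potential r\<close> \<xi> by simp
    then have "0 < weight t * potential t * g t" using weight_pos[of t] g_pos[of t] t \<xi> r by simp
    moreover have "0 < t" "t < R" using t \<xi> r by auto
    ultimately show "\<exists>y. ((\<lambda>t. weight t * g1 t) has_real_derivative y) (at t) \<and> 0 < y"
      using flux_has_derivative by blast
  qed (use \<xi> r continuous_on_flux in simp)
  moreover have "0 < weight \<xi> * g1 \<xi>" using weight_pos[of \<xi>] \<xi> by simp
  ultimately have "0 < weight r * g1 r" by linarith
  then show ?thesis using weight_pos[of r] by (simp add: zero_less_mult_iff)
qed

text \<open>Past a point where the potential is negative the flux \<open>weight g'\<close> decreases strictly, so
  \<open>g' \<le> 0\<close> there would force \<open>g'\<close> to stay below a negative constant up to \<open>R\<close>, contradicting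
  \<open>g'(R) = -\<alpha> g(R) \<ge> 0\<close>.\<close>

lemma g1_pos_where_potential_neg:
  assumes r: "0 < r" "r < R" and "potential r < 0"
  shows "0 < g1 r"
proof (rule ccontr)
  assume "\<not> 0 < g1 r"
  have flux_decreasing: "weight b * g1 b < weight a * g1 a" if "r \<le> a" "a < b" "b < R" for a b
  proof (rule DERIV_neg_imp_decreasing_open[OF \<open>a < b\<close> _ continuous_on_flux])
    fix t assume "a < t" "t < b"
    then have "weight t * potential t * g t < 0"
      using potential_strict_antimono[of r t] \<open>potential r < 0\<close> that r weight_pos[of t] g_pos[of t]
      by (simp add: mult_pos_neg mult_neg_pos)
    moreover have "0 < t" "t < R" using \<open>a < t\<close> \<open>t < b\<close> that r by auto
    ultimately show "\<exists>y. ((\<lambda>t. weight t * g1 t) has_real_derivative y) (at t) \<and> y < 0"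
      using flux_has_derivative by blast
  qed (use that r in auto)
  define r' where "r' = (r + R) / 2"
  have r': "r < r'" "r' < R" using r by (simp_all add: r'_def)
  have "weight r * g1 r \<le> 0" using \<open>\<not> 0 < g1 r\<close> weight_pos[of r] by (simp add: mult_le_0_iff)
  then have flux_r': "weight r' * g1 r' < 0" using flux_decreasing[of r r'] r' by simp
  obtain t\<^sub>m where t\<^sub>m: "\<forall>t\<in>{r'..R}. weight t \<le> weight t\<^sub>m"
    using continuous_attains_sup[of "{r'..R}" weight] continuous_on_weight r r' by auto
  define c where "c = weight r' * g1 r' / weight t\<^sub>m"
  have "g1 R \<le> c"
  proof (rule DERIV_right_endpoint_le[of r' R g g1])
    show "continuous_on {r'..R} g" using continuous_on_g by (rule continuous_on_subset) (use r r' in auto)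
    show "(g has_real_derivative g1 R) (at R within {r'..R})"
      by (rule DERIV_subset[OF g_has_derivative_within]) (use R_pos r r' in auto)
    fix t assume t: "r' < t" "t < R"
    show "(g has_real_derivative g1 t) (at t)" using g_has_derivative t r' r by simp
    have "weight t * g1 t < weight r' * g1 r'" using flux_decreasing[of r' t] t r' by simp
    then have "g1 t < weight r' * g1 r' / weight t" using weight_pos[of t] by (simp add: field_simps)
    also have "\<dots> \<le> c"
      unfolding c_def using t\<^sub>m t flux_r' weight_pos[of t] weight_pos[of t\<^sub>m]
      by (intro divide_left_mono_neg) auto
    finally show "g1 t \<le> c" by simp
  qed (use r' in simp)
  moreover have "c < 0" unfolding c_def using flux_r' weight_pos by (simp add: divide_neg_pos)
  moreover have "0 \<le> g1 R" using g1_R \<alpha>_nonpos g_pos[of R] R_pos by (simp add: mult_nonpos_nonneg)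
  ultimately show False by simp
qed

lemma g1_pos: "0 < r \<Longrightarrow> r < R \<Longrightarrow> 0 < g1 r"
  using g1_pos_where_potential_nonneg g1_pos_where_potential_neg by fastforce

text \<open>By the boundary condition \<open>excess R = 0\<close>; \<open>excess_slope\<close> is \<open>weight g\<^sup>2\<close> times the
  derivative of \<open>excess\<close>.\<close>

definition excess :: "real \<Rightarrow> real" where
  "excess t = g1 t / g t + \<alpha>"

definition excess_slope :: "real \<Rightarrow> real" where
  "excess_slope t = weight t * (g t * g2 t - (g1 t)\<^sup>2)"

lemma excess_has_derivative:
  assumes "0 < t" "t < R"
  shows "(excess has_real_derivative excess_slope t / (weight t * (g t)\<^sup>2)) (at t)"
proof -
  have "g t \<noteq> 0" using g_pos[of t] assms by simp
  then have "(excess has_real_derivative (g2 t * g t - g1 t * g1 t) / (g t * g t)) (at t)"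
    unfolding excess_def using assms
    by (auto intro!: derivative_eq_intros g_has_derivative g1_has_derivative)
  moreover have "(g2 t * g t - g1 t * g1 t) / (g t * g t) = excess_slope t / (weight t * (g t)\<^sup>2)"
    unfolding excess_slope_def using weight_pos[of t] \<open>g t \<noteq> 0\<close>
    by (simp add: field_simps power2_eq_square)
  ultimately show ?thesis by simp
qed

lemma continuous_on_excess: "0 < a \<Longrightarrow> b < R \<Longrightarrow> continuous_on {a..b} excess"
  by (intro continuous_at_imp_continuous_on ballI DERIV_isCont[OF excess_has_derivative]) auto

lemma excess_slope_has_derivative:
  assumes "0 < t" "t < R"
  shows "(excess_slope has_real_derivative
           weight t * g t * ((real m - 1) / t\<^sup>2 * (g1 t - 2 / t * g t) - h2 t * g1 t)) (at t)"
proof -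
  have "(excess_slope has_real_derivative weight t * ((real m - 1) / t\<^sup>2 * g t * g1 t
      - h2 t * g t * g1 t - 2 * (real m - 1) / t ^ 3 * (g t)\<^sup>2)) (at t)"
    unfolding excess_slope_def g2_def potential_def drift_def
    by (rule derivative_eq_intros weight_has_derivative[unfolded drift_def] g_has_derivative
        g1_has_derivative[unfolded g2_def potential_def drift_def] h1_deriv assms refl
        | use assms in \<open>simp add: field_simps power2_eq_square power3_eq_cube\<close>)+
  moreover have "weight t * ((real m - 1) / t\<^sup>2 * g t * g1 t - h2 t * g t * g1 t
      - 2 * (real m - 1) / t ^ 3 * (g t)\<^sup>2)
    = weight t * g t * ((real m - 1) / t\<^sup>2 * (g1 t - 2 / t * g t) - h2 t * g1 t)"
    using assms by (simp add: field_simps power2_eq_square power3_eq_cube)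
  ultimately show ?thesis by metis
qed

lemma continuous_on_excess_slope: "0 < a \<Longrightarrow> b < R \<Longrightarrow> continuous_on {a..b} excess_slope"
  by (intro continuous_at_imp_continuous_on ballI DERIV_isCont[OF excess_slope_has_derivative]) auto

lemma excess_le_0_iff: "0 < t \<Longrightarrow> t \<le> R \<Longrightarrow> excess t \<le> 0 \<longleftrightarrow> g1 t \<le> - \<alpha> * g t"
  using g_pos[of t] by (simp add: excess_def field_simps) arith

lemma excess_less_0_iff: "0 < t \<Longrightarrow> t \<le> R \<Longrightarrow> excess t < 0 \<longleftrightarrow> g1 t < - \<alpha> * g t"
  using g_pos[of t] by (simp add: excess_def field_simps) arith

text \<open>If \<open>g' < -\<alpha> g\<close> on \<open>(0, r)\<close>, then \<open>g e\<^bsup>\<alpha> t\<^esup>\<close> would decrease from \<open>g(0) = 0\<close>.\<close>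

lemma excess_nonneg_somewhere:
  assumes r: "0 < r" "r \<le> R"
  shows "\<exists>s. 0 < s \<and> s < r \<and> 0 \<le> excess s"
proof (rule ccontr)
  assume none: "\<nexists>s. 0 < s \<and> s < r \<and> 0 \<le> excess s"
  have below: "g1 s < - \<alpha> * g s" if "0 < s" "s < r" for s
  proof -
    have "excess s < 0" using none that by (meson not_le)
    then show ?thesis using excess_less_0_iff[of s] that r by simp
  qed
  have "g r * exp (\<alpha> * r) < g 0 * exp (\<alpha> * 0)"
  proof (rule DERIV_neg_imp_decreasing_open[OF \<open>0 < r\<close>])
    show "continuous_on {0..r} (\<lambda>t. g t * exp (\<alpha> * t))"
      using continuous_on_subset[OF continuous_on_g, of "{0..r}"] r by (auto intro!: continuous_intros)
    fix t assume t: "0 < t" "t < r"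
    have "((\<lambda>t. g t * exp (\<alpha> * t)) has_real_derivative exp (\<alpha> * t) * (g1 t + \<alpha> * g t)) (at t)"
      using t r by (auto intro!: derivative_eq_intros g_has_derivative simp: algebra_simps)
    moreover have "exp (\<alpha> * t) * (g1 t + \<alpha> * g t) < 0"
      using below[OF t] by (simp add: mult_pos_neg)
    ultimately show "\<exists>y. ((\<lambda>t. g t * exp (\<alpha> * t)) has_real_derivative y) (at t) \<and> y < 0" by blast
  qed
  then show False using g_0 g_pos[of r] r by (simp add: mult_less_0_iff)
qed

text \<open>Where the excess attains its maximum over \<open>[t\<^sub>0, R)\<close>, the function \<open>g e\<^bsup>-\<gamma> t\<^esup>\<close> with
  \<open>\<gamma> = -\<alpha> + excess t\<^sub>0\<close> is nonincreasing, which the boundary condition only allows if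
  \<open>excess t\<^sub>0 \<ge> 0\<close>.\<close>

lemma excess_nonneg_at_right_max:
  assumes t\<^sub>0: "0 < t\<^sub>0" "t\<^sub>0 < R" and max: "\<And>t. t\<^sub>0 \<le> t \<Longrightarrow> t < R \<Longrightarrow> excess t \<le> excess t\<^sub>0"
  shows "0 \<le> excess t\<^sub>0"
proof -
  define \<gamma> where "\<gamma> = - \<alpha> + excess t\<^sub>0"
  have "exp (- \<gamma> * R) * (g1 R - \<gamma> * g R) \<le> 0"
  proof (rule DERIV_right_endpoint_le[of t\<^sub>0 R "\<lambda>t. g t * exp (- \<gamma> * t)"])
    show "continuous_on {t\<^sub>0..R} (\<lambda>t. g t * exp (- \<gamma> * t))"
      using continuous_on_subset[OF continuous_on_g, of "{t\<^sub>0..R}"] t\<^sub>0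
      by (auto intro!: continuous_intros)
    have "(g has_real_derivative g1 R) (at R within {t\<^sub>0..R})"
      by (rule DERIV_subset[OF g_has_derivative_within]) (use R_pos t\<^sub>0 in auto)
    then show "((\<lambda>t. g t * exp (- \<gamma> * t)) has_real_derivative exp (- \<gamma> * R) * (g1 R - \<gamma> * g R))
        (at R within {t\<^sub>0..R})"
      by (auto intro!: derivative_eq_intros simp: algebra_simps)
    fix t assume t: "t\<^sub>0 < t" "t < R"
    show "((\<lambda>t. g t * exp (- \<gamma> * t)) has_real_derivative exp (- \<gamma> * t) * (g1 t - \<gamma> * g t)) (at t)"
      using t t\<^sub>0 by (auto intro!: derivative_eq_intros g_has_derivative simp: algebra_simps)
    have "excess t \<le> excess t\<^sub>0" using max t by simp
    then have "g1 t \<le> \<gamma> * g t"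
      using g_pos[of t] t t\<^sub>0 by (simp add: excess_def \<gamma>_def field_simps)
    then show "exp (- \<gamma> * t) * (g1 t - \<gamma> * g t) \<le> 0" by (simp add: mult_nonneg_nonpos)
  qed (use t\<^sub>0 in simp)
  then have "g1 R \<le> \<gamma> * g R" by (simp add: mult_le_0_iff)
  then have "0 \<le> excess t\<^sub>0 * g R" using g1_R by (simp add: \<gamma>_def algebra_simps)
  then show ?thesis using g_pos[of R] R_pos by (simp add: zero_le_mult_iff)
qed

end

locale radial_eigenfunction_convex = radial_eigenfunction +
  assumes h2_nonneg: "\<And>t. 0 < t \<Longrightarrow> 0 \<le> h2 t"
    and \<alpha>_ge: "- 2 / R \<le> \<alpha>"
begin

text \<open>This is where \<open>\<alpha> \<ge> -2/R\<close> enters: it gives \<open>g' \<le> -\<alpha> g < 2 g / t\<close>.\<close>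

lemma excess_slope_decreasing_where_excess_nonpos:
  assumes t: "0 < t" "t < R" and "excess t \<le> 0"
  shows "\<exists>y. (excess_slope has_real_derivative y) (at t) \<and> y < 0"
proof -
  have "g1 t \<le> - \<alpha> * g t" using excess_le_0_iff t \<open>excess t \<le> 0\<close> by simp
  also have "\<dots> \<le> 2 / R * g t" using \<alpha>_ge g_pos[of t] t by (intro mult_right_mono) auto
  also have "\<dots> < 2 / t * g t" using g_pos[of t] t by (simp add: frac_less2)
  finally have "g1 t - 2 / t * g t < 0" by simp
  moreover have "0 < (real m - 1) / t\<^sup>2" using m_ge_2 t by simp
  ultimately have "(real m - 1) / t\<^sup>2 * (g1 t - 2 / t * g t) < 0" using mult_pos_neg by blast
  moreover have "0 \<le> h2 t * g1 t" using h2_nonneg[of t] g1_pos[of t] t by simp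
  ultimately have "weight t * g t * ((real m - 1) / t\<^sup>2 * (g1 t - 2 / t * g t) - h2 t * g1 t) < 0"
    using weight_pos[of t] g_pos[of t] t by (simp add: mult_pos_neg)
  then show ?thesis using excess_slope_has_derivative t by blast
qed

lemma excess_le_after_negative_min:
  assumes t\<^sub>0: "0 < t\<^sub>0" "excess t\<^sub>0 < 0" "excess_slope t\<^sub>0 \<le> 0" and t: "t\<^sub>0 \<le> t" "t < R"
  shows "excess t \<le> excess t\<^sub>0"
proof (rule le_initial_value_while_negative[OF \<open>t\<^sub>0 \<le> t\<close> continuous_on_excess \<open>excess t\<^sub>0 < 0\<close>])
  fix u assume u: "t\<^sub>0 < u" "u \<le> t" and neg: "\<forall>v\<in>{t\<^sub>0..<u}. excess v < 0"
  have slope_neg: "excess_slope v < 0" if v: "t\<^sub>0 < v" "v < u" for v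
  proof -
    have "excess_slope v < excess_slope t\<^sub>0"
    proof (rule DERIV_neg_imp_decreasing_open[OF \<open>t\<^sub>0 < v\<close>])
      show "continuous_on {t\<^sub>0..v} excess_slope"
        using continuous_on_excess_slope t\<^sub>0 v u t by simp
      fix x assume x: "t\<^sub>0 < x" "x < v"
      have "excess x \<le> 0" using neg x v by (simp add: less_imp_le)
      then show "\<exists>y. (excess_slope has_real_derivative y) (at x) \<and> y < 0"
        using excess_slope_decreasing_where_excess_nonpos x v u t t\<^sub>0 by simp
    qed
    then show ?thesis using \<open>excess_slope t\<^sub>0 \<le> 0\<close> by simp
  qed
  show "excess u < excess t\<^sub>0"
  proof (rule DERIV_neg_imp_decreasing_open[OF \<open>t\<^sub>0 < u\<close>])
    show "continuous_on {t\<^sub>0..u} excess" using continuous_on_excess t\<^sub>0 u t by simp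
    fix v assume v: "t\<^sub>0 < v" "v < u"
    have "excess_slope v / (weight v * (g v)\<^sup>2) < 0"
      using slope_neg[OF v] weight_pos[of v] g_pos[of v] v t\<^sub>0 u t by (simp add: divide_neg_pos)
    moreover have "(excess has_real_derivative excess_slope v / (weight v * (g v)\<^sup>2)) (at v)"
      using excess_has_derivative v t\<^sub>0 u t by simp
    ultimately show "\<exists>y. (excess has_real_derivative y) (at v) \<and> y < 0" by blast
  qed
qed (use t\<^sub>0 t in simp_all)

lemma neg_alpha_g_le_g1:
  assumes r: "0 < r" "r \<le> R"
  shows "- \<alpha> * g r \<le> g1 r"
proof (cases "r = R")
  case True
  then show ?thesis using g1_R by simp
next
  case False
  with r have "r < R" by simp
  show ?thesis
  proof (rule ccontr)
    assume "\<not> ?thesis"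
    then have "excess r < 0" using excess_less_0_iff[of r] r by simp
    obtain s where s: "0 < s" "s < r" "0 \<le> excess s" using excess_nonneg_somewhere r by blast
    obtain t\<^sub>0 where t\<^sub>0: "t\<^sub>0 \<in> {s..r}" "\<forall>y\<in>{s..r}. excess t\<^sub>0 \<le> excess y"
      using continuous_attains_inf[of "{s..r}" excess] continuous_on_excess[of s r] s \<open>r < R\<close> by auto
    have "excess t\<^sub>0 \<le> excess r" using t\<^sub>0(2) s by simp
    then have "excess t\<^sub>0 < 0" using \<open>excess r < 0\<close> by simp
    then have "s < t\<^sub>0" using t\<^sub>0 s by (cases "t\<^sub>0 = s") auto
    have "excess_slope t\<^sub>0 / (weight t\<^sub>0 * (g t\<^sub>0)\<^sup>2) \<le> 0"
    proof (rule DERIV_left_min_nonpos[OF _ \<open>s < t\<^sub>0\<close>])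
      show "(excess has_real_derivative excess_slope t\<^sub>0 / (weight t\<^sub>0 * (g t\<^sub>0)\<^sup>2)) (at t\<^sub>0 within {s..t\<^sub>0})"
        using excess_has_derivative t\<^sub>0 s \<open>r < R\<close> by (auto intro: has_field_derivative_at_within)
    qed (use t\<^sub>0 in auto)
    moreover have "0 < weight t\<^sub>0 * (g t\<^sub>0)\<^sup>2"
      using weight_pos[of t\<^sub>0] g_pos[of t\<^sub>0] t\<^sub>0 s \<open>r < R\<close> by simp
    ultimately have "excess_slope t\<^sub>0 \<le> 0" by (simp add: divide_le_0_iff)
    then have "0 \<le> excess t\<^sub>0"
      using excess_le_after_negative_min \<open>excess t\<^sub>0 < 0\<close> t\<^sub>0 s \<open>r < R\<close>
      by (intro excess_nonneg_at_right_max) auto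
    then show False using \<open>excess t\<^sub>0 < 0\<close> by simp
  qed
qed

end

theorem proposition2p2:
  fixes m :: nat and R \<alpha> \<mu> :: real
    and h h1 h2 g g1 :: "real \<Rightarrow> real"
  assumes "m \<ge> 2" and "R > 0" and "\<alpha> \<le> 0"
    and "\<forall>r\<ge>0. (h has_real_derivative h1 r) (at r within {0..})"
    and "\<forall>r\<ge>0. (h1 has_real_derivative h2 r) (at r within {0..})"
    and "continuous_on {0..} h2"
    and "\<forall>r>0. h2 r \<ge> 0"
    and "sl_first_eigenvalue m h1 \<alpha> R \<mu>"
    and "sl_eigenpair m h1 \<alpha> R \<mu> g g1"
    and "\<forall>r\<in>{0<..R}. g r > 0"
    and "g1 0 = 1"
  shows "(\<forall>r\<in>{0<..<R}. g1 r > 0) \<and>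
         (\<alpha> \<ge> - 2 / R \<longrightarrow> (\<forall>r\<in>{0<..R}. g1 r \<ge> - \<alpha> * g r))"
proof -
  have at_interior: "at t within {0..} = at t" if "0 < t" for t :: real
    using that by (intro at_within_interior) simp
  interpret radial_eigenfunction m h h1 h2 \<alpha> R \<mu> g g1
  proof
    show "(h has_real_derivative h1 t) (at t)" "(h1 has_real_derivative h2 t) (at t)" if "0 < t" for t
      using assms(4,5) that at_interior[OF that] by (metis less_imp_le)+
  qed (use assms(1-3,9,10) in auto)
  have "0 < g1 r" if "r \<in> {0<..<R}" for r
    using g1_pos that by simp
  moreover have "- \<alpha> * g r \<le> g1 r" if "- 2 / R \<le> \<alpha>" "r \<in> {0<..R}" for r
  proof -
    interpret radial_eigenfunction_convex m h h1 h2 \<alpha> R \<mu> g g1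
      using assms(7) that(1) by unfold_locales auto
    show ?thesis using neg_alpha_g_le_g1 that(2) by simp
  qed
  ultimately show ?thesis by auto
qed

end
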